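(* Let $\eta>0$, $\beta\in[0,1)$ and $\lambda_i$ with $\eta\lambda_i>0$. Define ${\mathcal{M}}_i:\mathbb{S}^2\to\mathbb{S}^2$ by ${\mathcal{M}}_i({\bm{X}}):={\bm{A}}_i{\bm{X}}{\bm{A}}_i^\top+\eta^2\lambda_i^2({\bm{X}})_{11}{\bm{Q}}$, where ${\bm{A}}_i=\begin{bmatrix}1-\eta\lambda_i&-\beta\\ \eta\lambda_i&\beta\end{bmatrix}$ and ${\bm{Q}}=\begin{bmatrix}1&-1\\-1&1\end{bmatrix}$. Then: (a) $\rho({\mathcal{M}}_i)<1$ if and only if $\eta\lambda_i<1-\beta^2$; (b) if $\eta\lambda_i<1-\beta^2$, then $\mathrm{Id}-{\mathcal{M}}_i$ is invertible and $(\mathrm{Id}-{\mathcal{M}}_i)^{-1}(\mathbb{S}^2_+)\subseteq\mathbb{S}^2_+$; (c) if $\eta\lambda_i<1-\beta^2$, then ${\bm{Y}}_i:=(\mathrm{Id}-{\mathcal{M}}_i)^{-1}{\bm{Q}}\in\mathbb{S}^2_+$ and $\gamma_i:=({\bm{Y}}_i)_{11}=\dfrac{1+\beta}{2\eta\lambda_i(1-\beta^2-\eta\lambda_i)}$.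
   Context: $\mathbb{S}^2$ denotes the space of real symmetric $2\times2$ matrices and $\mathbb{S}^2_+$ the cone of positive semidefinite ones; $\rho(\cdot)$ denotes spectral radius and $\mathrm{Id}$ the identity map. *)

theory Defs
  imports "HOL-Analysis.Analysis"
begin

definition mat2 :: "'a::comm_ring_1 \<Rightarrow> 'a \<Rightarrow> 'a \<Rightarrow> 'a \<Rightarrow> 'a^2^2" where
  "mat2 a b c d = (\<chi> i j. if i = 1 then (if j = 1 then a else b) else (if j = 1 then c else d))"

definition smat :: "'a::comm_ring_1 \<Rightarrow> 'a^2^2 \<Rightarrow> 'a^2^2" where
  "smat c M = (\<chi> i j. c * M$i$j)"

definition S2 :: "(real^2^2) set" where
  "S2 = {X. transpose X = X}"

definition psd2 :: "real^2^2 \<Rightarrow> bool" where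
  "psd2 X \<longleftrightarrow> transpose X = X \<and> (\<forall>v::real^2. 0 \<le> v \<bullet> (X *v v))"

definition S2_plus :: "(real^2^2) set" where
  "S2_plus = {X. psd2 X}"

text \<open>A_i, Q and the operator M_i(X) = A X A^T + eta^2 lambda^2 X_11 Q, stated generically
  so that the same formula gives the operator on real matrices and its complexification.\<close>
definition Amat :: "'a::comm_ring_1 \<Rightarrow> 'a \<Rightarrow> 'a \<Rightarrow> 'a^2^2" where
  "Amat \<eta> lam \<beta> = mat2 (1 - \<eta>*lam) (-\<beta>) (\<eta>*lam) \<beta>"

definition Qmat :: "'a::comm_ring_1^2^2" where
  "Qmat = mat2 1 (-1) (-1) 1"

definition Mop :: "'a::comm_ring_1 \<Rightarrow> 'a \<Rightarrow> 'a \<Rightarrow> 'a^2^2 \<Rightarrow> 'a^2^2" where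
  "Mop \<eta> lam \<beta> X = Amat \<eta> lam \<beta> ** X ** transpose (Amat \<eta> lam \<beta>)
      + smat (\<eta>^2 * lam^2 * X$1$1) Qmat"

text \<open>Spectral radius of M_i as a linear operator on S^2: the largest modulus of an
  eigenvalue of its complexification, acting on complex symmetric 2x2 matrices
  (the complexification of S^2).\<close>
definition Mop_eigenvalue :: "real \<Rightarrow> real \<Rightarrow> real \<Rightarrow> complex \<Rightarrow> bool" where
  "Mop_eigenvalue \<eta> lam \<beta> z \<longleftrightarrow>
     (\<exists>Z::complex^2^2. transpose Z = Z \<and> Z \<noteq> 0 \<and>
        Mop (complex_of_real \<eta>) (complex_of_real lam) (complex_of_real \<beta>) Z = smat z Z)"

definition Mop_specrad :: "real \<Rightarrow> real \<Rightarrow> real \<Rightarrow> real" where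
  "Mop_specrad \<eta> lam \<beta> = Sup (cmod ` {z. Mop_eigenvalue \<eta> lam \<beta> z})"

end

theory Submission
  imports Defs "HOL-Computational_Algebra.Polynomial"
begin

text \<open>In the coordinates \<open>(X\<^sub>1\<^sub>1, X\<^sub>1\<^sub>2, X\<^sub>2\<^sub>2)\<close> of \<open>S\<^sup>2\<close> the operator \<open>M\<close> is a
  \<open>3 \<times> 3\<close> matrix whose characteristic polynomial \<open>p\<close> is a real cubic with
  \<open>p(1) = 2 \<eta>\<lambda> (1 - \<beta>\<^sup>2 - \<eta>\<lambda>)\<close>. If \<open>\<eta>\<lambda> < 1 - \<beta>\<^sup>2\<close>, the Schur-Cohn-Jury conditions
  hold for \<open>p\<close>, so all eigenvalues lie in the open unit disk; otherwise \<open>p(1) \<le> 0\<close> and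
  \<open>p\<close> has a real root \<open>\<ge> 1\<close>.

  For (b) and (c), \<open>Id - M\<close> is the Stein operator \<open>X \<mapsto> X - A X A\<^sup>T\<close> minus the rank-one
  map \<open>X \<mapsto> \<eta>\<^sup>2\<lambda>\<^sup>2 X\<^sub>1\<^sub>1 Q\<close>. For the Schur stable \<open>2 \<times> 2\<close> matrix \<open>A\<close> the Stein
  operator has the explicit inverse \<open>V \<mapsto> \<alpha> V + \<gamma> B V B\<^sup>T\<close> with \<open>\<alpha>, \<gamma> > 0\<close>, which
  preserves \<open>S\<^sup>2\<^sub>+\<close>. The Sherman-Morrison formula then inverts \<open>Id - M\<close>; the rank-one
  correction it adds has a positive denominator exactly when \<open>\<eta>\<lambda> < 1 - \<beta>\<^sup>2\<close>.\<close>

section \<open>Real cubics and the Schur-Cohn test\<close>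

lemma cmod_combination_identity:
  fixes u w :: complex and p q :: real
  shows "cmod (of_real p * w - of_real q * u)^2 - cmod (of_real p * u - of_real q * w)^2
    = (p^2 - q^2) * (cmod w ^ 2 - cmod u ^ 2)"
  unfolding cmod_power2 by (simp add: power2_eq_square) algebra

text \<open>\<open>P'\<close> stands for the reversal \<open>z\<^sup>n P(1/z)\<close> of a real polynomial \<open>P\<close> of degree \<open>n\<close>.
  The property forces the zeros of \<open>P\<close> into the open unit disk and passes from the Schur-Cohn
  reduct \<open>Q\<close> to \<open>P\<close> (lemma \<open>schur_pair_reduce\<close>).\<close>

definition schur_pair :: "(complex \<Rightarrow> complex) \<Rightarrow> (complex \<Rightarrow> complex) \<Rightarrow> bool" where
  "schur_pair P P' \<longleftrightarrow>
     (\<forall>z. (1 < cmod z \<longrightarrow> cmod (P' z) < cmod (P z)) \<and> (cmod z = 1 \<longrightarrow> P z \<noteq> 0))"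

lemma schur_pair_zero_in_disk:
  assumes "schur_pair P P'" and "P z = 0"
  shows "cmod z < 1"
  using assms unfolding schur_pair_def
  by (metis linorder_neqE_linordered_idom norm_ge_zero norm_zero not_less)

lemma schur_pair_linear:
  fixes k m :: real
  assumes "\<bar>m\<bar> < k"
  shows "schur_pair (\<lambda>z. of_real k * z + of_real m) (\<lambda>z. of_real m * z + of_real k)"
  unfolding schur_pair_def
proof (intro allI conjI impI)
  fix z :: complex
  have "\<bar>m\<bar>^2 < k^2"
    using assms by (intro power_strict_mono) auto
  then have "0 < k^2 - m^2"
    by simp
  have identity: "cmod (of_real k * z + of_real m)^2 - cmod (of_real m * z + of_real k)^2
      = (k^2 - m^2) * (cmod z ^ 2 - 1)"
    using cmod_combination_identity[of k z "-m" 1] by (simp add: algebra_simps)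
  show "cmod (of_real m * z + of_real k) < cmod (of_real k * z + of_real m)" if "1 < cmod z"
  proof -
    have "1 < cmod z ^ 2"
      using that by (simp add: one_less_power)
    with \<open>0 < k^2 - m^2\<close> have "0 < (k^2 - m^2) * (cmod z ^ 2 - 1)"
      by simp
    with identity have "cmod (of_real m * z + of_real k)^2 < cmod (of_real k * z + of_real m)^2"
      by linarith
    then show ?thesis
      by (rule power2_less_imp_less) simp
  qed
  show "of_real k * z + of_real m \<noteq> 0" if "cmod z = 1"
  proof
    assume "of_real k * z + of_real m = 0"
    then have "cmod (of_real m) = cmod (of_real k * z)"
      by (metis add.inverse_unique norm_minus_cancel add.commute)
    with that assms show False
      by (simp add: norm_mult)
  qed
qed

lemma schur_pair_reduce:
  fixes c r :: real
  assumes "\<bar>c\<bar> < 1" and "0 < r"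
    and reduce: "\<And>z. z * (of_real r * Q z) = P z - of_real c * P' z"
    and reduce': "\<And>z. of_real r * Q' z = P' z - of_real c * P z"
    and circle: "\<And>z. cmod z = 1 \<Longrightarrow> cmod (P' z) = cmod (P z)"
    and "schur_pair Q Q'"
  shows "schur_pair P P'"
  unfolding schur_pair_def
proof (intro allI conjI impI)
  fix z :: complex
  have "0 < 1 - c^2"
    using assms(1) by (simp add: abs_square_less_1)
  have "cmod (P z - of_real c * P' z) = cmod z * (r * cmod (Q z))"
    unfolding reduce[symmetric] using assms(2) by (simp add: norm_mult)
  moreover have "cmod (P' z - of_real c * P z) = r * cmod (Q' z)"
    unfolding reduce'[symmetric] using assms(2) by (simp add: norm_mult)
  ultimately have identity: "r^2 * (cmod z ^ 2 * cmod (Q z) ^ 2 - cmod (Q' z) ^ 2)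
      = (1 - c^2) * (cmod (P z) ^ 2 - cmod (P' z) ^ 2)"
    using cmod_combination_identity[of 1 "P z" c "P' z"]
    by (simp add: power_mult_distrib algebra_simps)
  show "cmod (P' z) < cmod (P z)" if "1 < cmod z"
  proof -
    have "cmod (Q' z) < cmod (Q z)"
      using \<open>schur_pair Q Q'\<close> that by (simp add: schur_pair_def)
    then have "cmod (Q' z) ^ 2 < 1 * cmod (Q z) ^ 2"
      by (simp add: power_strict_mono)
    also have "\<dots> \<le> cmod z ^ 2 * cmod (Q z) ^ 2"
      using that by (intro mult_right_mono) (simp_all add: one_le_power)
    finally have "0 < r^2 * (cmod z ^ 2 * cmod (Q z) ^ 2 - cmod (Q' z) ^ 2)"
      using assms(2) by simp
    with identity \<open>0 < 1 - c^2\<close> have "cmod (P' z)^2 < cmod (P z)^2"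
      by (simp add: zero_less_mult_iff)
    then show ?thesis
      by (rule power2_less_imp_less) simp
  qed
  show "P z \<noteq> 0" if "cmod z = 1"
  proof
    assume "P z = 0"
    with circle[OF that] have "z * (of_real r * Q z) = 0"
      by (simp add: reduce)
    with that assms(2) have "Q z = 0"
      by auto
    with that \<open>schur_pair Q Q'\<close> show False
      by (simp add: schur_pair_def)
  qed
qed

lemma unit_circle_mult_cnj: "cmod z = 1 \<Longrightarrow> z * cnj z = 1"
  by (metis complex_norm_square of_real_1 one_power2)

lemma cmod_unit_circle_mult_cnj: "cmod z = 1 \<Longrightarrow> cmod (z^n * cnj w) = cmod w"
  by (simp add: norm_mult norm_power)

lemma quadratic_reversal_on_unit_circle:
  fixes \<alpha> b \<gamma> :: real
  assumes "cmod z = 1"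
  shows "cmod (of_real \<gamma> * z^2 + of_real b * z + of_real \<alpha>) = cmod (of_real \<alpha> * z^2 + of_real b * z + of_real \<gamma>)"
proof -
  have "z^2 * cnj (of_real \<alpha> * z^2 + of_real b * z + of_real \<gamma>)
      = of_real \<alpha> * (z * cnj z)^2 + of_real b * z * (z * cnj z) + of_real \<gamma> * z^2"
    by (simp add: power2_eq_square algebra_simps)
  then have "of_real \<gamma> * z^2 + of_real b * z + of_real \<alpha> = z^2 * cnj (of_real \<alpha> * z^2 + of_real b * z + of_real \<gamma>)"
    by (simp add: unit_circle_mult_cnj[OF assms])
  then show ?thesis
    by (simp only: cmod_unit_circle_mult_cnj[OF assms])
qed

lemma cubic_reversal_on_unit_circle:
  fixes c0 c1 c2 :: real
  assumes "cmod z = 1"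
  shows "cmod (of_real c0 * z^3 + of_real c1 * z^2 + of_real c2 * z + 1)
    = cmod (z^3 + of_real c2 * z^2 + of_real c1 * z + of_real c0)"
proof -
  have "z^3 * cnj (z^3 + of_real c2 * z^2 + of_real c1 * z + of_real c0)
      = (z * cnj z)^3 + of_real c2 * z * (z * cnj z)^2 + of_real c1 * z^2 * (z * cnj z) + of_real c0 * z^3"
    by (simp add: power2_eq_square power3_eq_cube algebra_simps)
  then have "of_real c0 * z^3 + of_real c1 * z^2 + of_real c2 * z + 1
      = z^3 * cnj (z^3 + of_real c2 * z^2 + of_real c1 * z + of_real c0)"
    by (simp add: unit_circle_mult_cnj[OF assms] algebra_simps)
  then show ?thesis
    by (simp only: cmod_unit_circle_mult_cnj[OF assms])
qed

lemma schur_pair_quadratic: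
  fixes \<alpha> b \<gamma> :: real
  assumes "\<bar>\<gamma>\<bar> < \<alpha>" and "\<bar>b\<bar> < \<alpha> + \<gamma>"
  shows "schur_pair (\<lambda>z. of_real \<alpha> * z^2 + of_real b * z + of_real \<gamma>) (\<lambda>z. of_real \<gamma> * z^2 + of_real b * z + of_real \<alpha>)"
proof (rule schur_pair_reduce)
  show "\<bar>\<gamma> / \<alpha>\<bar> < 1" "0 < (\<alpha> - \<gamma>) / \<alpha>"
    using assms(1) by (auto simp: abs_less_iff field_simps)
  show "z * (of_real ((\<alpha> - \<gamma>) / \<alpha>) * (of_real (\<alpha> + \<gamma>) * z + of_real b))
      = of_real \<alpha> * z^2 + of_real b * z + of_real \<gamma> - of_real (\<gamma> / \<alpha>) * (of_real \<gamma> * z^2 + of_real b * z + of_real \<alpha>)"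
    "of_real ((\<alpha> - \<gamma>) / \<alpha>) * (of_real b * z + of_real (\<alpha> + \<gamma>))
      = of_real \<gamma> * z^2 + of_real b * z + of_real \<alpha> - of_real (\<gamma> / \<alpha>) * (of_real \<alpha> * z^2 + of_real b * z + of_real \<gamma>)"
    for z :: complex
    using assms(1) by (simp_all add: field_simps power2_eq_square)
  show "cmod (of_real \<gamma> * z^2 + of_real b * z + of_real \<alpha>) = cmod (of_real \<alpha> * z^2 + of_real b * z + of_real \<gamma>)"
    if "cmod z = 1" for z :: complex
    using that by (rule quadratic_reversal_on_unit_circle)
  show "schur_pair (\<lambda>z. of_real (\<alpha> + \<gamma>) * z + of_real b) (\<lambda>z. of_real b * z + of_real (\<alpha> + \<gamma>))"
    using assms(2) by (rule schur_pair_linear)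
qed

lemma cubic_zero_in_unit_disk:
  fixes c0 c1 c2 :: real and z :: complex
  assumes "\<bar>c1 - c0 * c2\<bar> < 1 - c0^2" and "0 < 1 + c2 + c1 + c0" and "0 < 1 - c2 + c1 - c0"
    and "z^3 + of_real c2 * z^2 + of_real c1 * z + of_real c0 = 0"
  shows "cmod z < 1"
proof -
  have "c0^2 < 1"
    using assms(1) by linarith
  then have "\<bar>c0\<bar> < 1"
    by (simp add: abs_square_less_1)
  have "0 < (1 - c0) * (1 + c2 + c1 + c0)" "0 < (1 + c0) * (1 - c2 + c1 - c0)"
    using \<open>\<bar>c0\<bar> < 1\<close> assms(2,3) by simp_all
  moreover have "(1 - c0) * (1 + c2 + c1 + c0) = (1 - c0^2) + (c1 - c0 * c2) + (c2 - c0 * c1)"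
    "(1 + c0) * (1 - c2 + c1 - c0) = (1 - c0^2) + (c1 - c0 * c2) - (c2 - c0 * c1)"
    by (simp_all add: power2_eq_square algebra_simps)
  ultimately have "\<bar>c2 - c0 * c1\<bar> < (1 - c0^2) + (c1 - c0 * c2)"
    by (simp only: abs_less_iff) linarith
  with assms(1) have "schur_pair
      (\<lambda>z. of_real (1 - c0^2) * z^2 + of_real (c2 - c0 * c1) * z + of_real (c1 - c0 * c2))
      (\<lambda>z. of_real (c1 - c0 * c2) * z^2 + of_real (c2 - c0 * c1) * z + of_real (1 - c0^2))"
    by (rule schur_pair_quadratic)
  then have "schur_pair (\<lambda>z. z^3 + of_real c2 * z^2 + of_real c1 * z + of_real c0)
      (\<lambda>z. of_real c0 * z^3 + of_real c1 * z^2 + of_real c2 * z + 1)"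
  proof (rule schur_pair_reduce[OF \<open>\<bar>c0\<bar> < 1\<close> zero_less_one, rotated 3])
    show "z * (of_real 1 * (of_real (1 - c0^2) * z^2 + of_real (c2 - c0 * c1) * z + of_real (c1 - c0 * c2)))
      = z^3 + of_real c2 * z^2 + of_real c1 * z + of_real c0
        - of_real c0 * (of_real c0 * z^3 + of_real c1 * z^2 + of_real c2 * z + 1)"
      "of_real 1 * (of_real (c1 - c0 * c2) * z^2 + of_real (c2 - c0 * c1) * z + of_real (1 - c0^2))
      = of_real c0 * z^3 + of_real c1 * z^2 + of_real c2 * z + 1
        - of_real c0 * (z^3 + of_real c2 * z^2 + of_real c1 * z + of_real c0)" for z :: complex
      by (simp_all add: power2_eq_square power3_eq_cube algebra_simps)
    show "cmod (of_real c0 * z^3 + of_real c1 * z^2 + of_real c2 * z + 1)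
      = cmod (z^3 + of_real c2 * z^2 + of_real c1 * z + of_real c0)" if "cmod z = 1" for z :: complex
      using that by (rule cubic_reversal_on_unit_circle)
  qed
  then show ?thesis
    using assms(4) by (rule schur_pair_zero_in_disk)
qed

lemma finite_cubic_roots: "finite {z::'a::idom. z^3 + c2 * z^2 + c1 * z + c0 = 0}"
proof -
  have "poly [:c0, c1, c2, 1:] z = z^3 + c2 * z^2 + c1 * z + c0" for z
    by (simp add: power2_eq_square power3_eq_cube algebra_simps)
  then show ?thesis
    using poly_roots_finite[of "[:c0, c1, c2, 1:]"] by (simp only:) simp
qed

lemma cubic_real_root_above:
  fixes c0 c1 c2 s :: real
  assumes "s^3 + c2 * s^2 + c1 * s + c0 \<le> 0"
  shows "\<exists>t\<ge>s. t^3 + c2 * t^2 + c1 * t + c0 = 0"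
proof -
  define R where "R = \<bar>s\<bar> + 1 + \<bar>c0\<bar> + \<bar>c1\<bar> + \<bar>c2\<bar>"
  have "1 \<le> R" "s \<le> R"
    by (auto simp: R_def)
  then have "R \<le> R^2" "1 \<le> R^2"
    using mult_mono[of 1 R 1 R] by (simp_all add: power2_eq_square)
  have "- \<bar>c2\<bar> * R^2 \<le> c2 * R^2"
    by (intro mult_right_mono) auto
  moreover have "- \<bar>c1\<bar> * R^2 \<le> - \<bar>c1\<bar> * R"
    using \<open>R \<le> R^2\<close> by (simp add: mult_left_mono)
  moreover have "- \<bar>c1\<bar> * R \<le> c1 * R"
    using \<open>1 \<le> R\<close> by (intro mult_right_mono) auto
  moreover have "- \<bar>c0\<bar> * R^2 \<le> - \<bar>c0\<bar>"
    using mult_left_mono[OF \<open>1 \<le> R^2\<close>, of "\<bar>c0\<bar>"] by simp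
  moreover have "R^3 = (\<bar>s\<bar> + 1) * R^2 + \<bar>c0\<bar> * R^2 + \<bar>c1\<bar> * R^2 + \<bar>c2\<bar> * R^2"
    by (simp add: R_def power2_eq_square power3_eq_cube algebra_simps)
  moreover have "0 \<le> (\<bar>s\<bar> + 1) * R^2" "- \<bar>c0\<bar> \<le> c0"
    by simp_all
  ultimately have "0 \<le> R^3 + c2 * R^2 + c1 * R + c0"
    by linarith
  moreover have "continuous_on {s..R} (\<lambda>t. t^3 + c2 * t^2 + c1 * t + c0)"
    by (intro continuous_intros)
  ultimately show ?thesis
    using IVT'[of "\<lambda>t. t^3 + c2 * t^2 + c1 * t + c0" s 0 R] assms \<open>s \<le> R\<close> by auto
qed

section \<open>The Stein equation for 2 \<times> 2 matrices\<close>

definition stein :: "real^'n^'n \<Rightarrow> real^'n^'n \<Rightarrow> real^'n^'n" where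
  "stein A X = X - A ** X ** transpose A"

text \<open>With \<open>d = det A\<close>, \<open>t = trace A\<close> and \<open>B = A - k I\<close>, Cayley-Hamilton writes
  \<open>B X B\<^sup>T - (A B) X (A B)\<^sup>T\<close> as a combination of \<open>X\<close>, \<open>A X A\<^sup>T\<close> and \<open>A X + X A\<^sup>T\<close>
  (lemma \<open>congruence_shift_diff\<close>). The choice \<open>k = d t / (1 + d)\<close> kills the last term, and
  the two coefficients below make \<open>V \<mapsto> \<alpha> V + \<gamma> B V B\<^sup>T\<close> the inverse of \<open>stein A\<close>.\<close>

definition stein_solution :: "real^2^2 \<Rightarrow> real^2^2 \<Rightarrow> real^2^2" where
  "stein_solution A V =
     (let d = det A; t = trace A; B = A - mat (d * t / (1 + d)) in
      (1 / (1 - d^2)) *\<^sub>R V + ((1 + d) / ((1 - d) * ((1 + d)^2 - t^2))) *\<^sub>R (B ** V ** transpose B))"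

lemma linear_congruence: "linear (\<lambda>X::real^'n^'n. B ** X ** transpose B)"
  by (intro linearI)
    (simp_all add: vec_eq_iff matrix_matrix_mult_def transpose_def sum.distrib sum_distrib_left
      sum_distrib_right scaleR_sum_right algebra_simps)

lemma congruence_mult:
  "A ** (B ** X ** transpose B) ** transpose A = (A ** B) ** X ** transpose (A ** B)"
  for A B X :: "real^'n^'n"
  by (simp add: matrix_transpose_mul matrix_mul_assoc)

lemma congruence_shift_diff:
  fixes A X :: "real^2^2" and k :: real
  defines "B \<equiv> A - mat k"
  shows "B ** X ** transpose B - (A ** B) ** X ** transpose (A ** B)
    = (1 - (trace A - k)^2) *\<^sub>R (A ** X ** transpose A)
      + (det A * (trace A - k) - k) *\<^sub>R (A ** X + X ** transpose A) + (k^2 - det A ^ 2) *\<^sub>R X"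
  unfolding B_def
  by (simp add: vec_eq_iff forall_2 det_2 trace_def sum_2 matrix_matrix_mult_def transpose_def mat_def
      algebra_simps power2_eq_square)

lemma stein_coefficients:
  fixes d t :: real
  assumes "d^2 \<noteq> 1" and "(1 + d)^2 \<noteq> t^2"
  defines "k \<equiv> d * t / (1 + d)" and "\<gamma> \<equiv> (1 + d) / ((1 - d) * ((1 + d)^2 - t^2))"
  shows "d * (t - k) - k = 0" and "\<gamma> * (1 - (t - k)^2) = 1 / (1 - d^2)"
    and "1 / (1 - d^2) + \<gamma> * (k^2 - d^2) = 1"
proof -
  have D: "(1 + d)^2 - t^2 \<noteq> 0" and "1 - d^2 \<noteq> 0"
    using assms(1,2) by simp_all
  moreover have factor: "(1 - d) * (1 + d) = 1 - d^2"
    by (simp add: power2_eq_square algebra_simps)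
  ultimately have d: "1 + d \<noteq> 0" "1 - d \<noteq> 0" "1 - d^2 \<noteq> 0"
    by auto
  have tk: "t - k = t / (1 + d)"
    using d by (simp add: k_def field_simps)
  then show "d * (t - k) - k = 0"
    using d by (simp add: k_def field_simps)
  have "1 - (t - k)^2 = ((1 + d)^2 - t^2) / (1 + d)^2"
    using d unfolding tk by (simp add: field_simps)
  then have "\<gamma> * (1 - (t - k)^2) = 1 / ((1 - d) * (1 + d))"
    using d D by (simp add: \<gamma>_def power2_eq_square)
  then show "\<gamma> * (1 - (t - k)^2) = 1 / (1 - d^2)"
    by (simp only: factor)
  have "k^2 - d^2 = -(d^2) * ((1 + d)^2 - t^2) / (1 + d)^2"
    using d by (simp add: k_def field_simps)
  then have "\<gamma> * (k^2 - d^2) = -(d^2) / ((1 - d) * (1 + d))"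
    using d D by (simp add: \<gamma>_def power2_eq_square)
  then show "1 / (1 - d^2) + \<gamma> * (k^2 - d^2) = 1"
    using d by (simp add: factor field_simps)
qed

lemma stein_solution_identity:
  fixes A X :: "real^2^2"
  assumes "det A ^ 2 \<noteq> 1" and "(1 + det A)^2 \<noteq> trace A ^ 2"
  defines "B \<equiv> A - mat (det A * trace A / (1 + det A))"
  shows "(1 / (1 - det A ^ 2)) *\<^sub>R stein A X
      + ((1 + det A) / ((1 - det A) * ((1 + det A)^2 - trace A ^ 2))) *\<^sub>R
          (B ** X ** transpose B - (A ** B) ** X ** transpose (A ** B)) = X"
proof -
  have combination: "\<alpha> *\<^sub>R (x - m) + \<gamma> *\<^sub>R (c1 *\<^sub>R m + c2 *\<^sub>R n + c3 *\<^sub>R x) = x"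
    if "c2 = 0" "\<gamma> * c1 = \<alpha>" "\<alpha> + \<gamma> * c3 = 1" for x m n :: "real^2^2" and \<alpha> \<gamma> c1 c2 c3 :: real
  proof -
    have "\<alpha> *\<^sub>R (x - m) + \<gamma> *\<^sub>R (c1 *\<^sub>R m + c2 *\<^sub>R n + c3 *\<^sub>R x) = \<alpha> *\<^sub>R x + (\<gamma> * c3) *\<^sub>R x"
      using that by (simp add: algebra_simps)
    also have "\<dots> = x"
      using that(3) by (metis scaleR_add_left scaleR_one)
    finally show ?thesis .
  qed
  show ?thesis
    unfolding B_def stein_def congruence_shift_diff
    by (rule combination) (use stein_coefficients[OF assms(1,2)] in simp_all)
qed

lemma stein_solution_stein:
  assumes "det A ^ 2 \<noteq> 1" and "(1 + det A)^2 \<noteq> trace A ^ 2"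
  shows "stein_solution A (stein A X) = X"
proof -
  define B where "B = A - mat (det A * trace A / (1 + det A))"
  have "B ** A = A ** B"
    by (simp add: B_def vec_eq_iff forall_2 matrix_matrix_mult_def mat_def sum_2 algebra_simps)
  then have "B ** stein A X ** transpose B = B ** X ** transpose B - (A ** B) ** X ** transpose (A ** B)"
    unfolding stein_def linear_diff[OF linear_congruence] congruence_mult by simp
  then show ?thesis
    using stein_solution_identity[OF assms, of X]
    by (simp add: stein_solution_def Let_def B_def)
qed

lemma stein_stein_solution:
  assumes "det A ^ 2 \<noteq> 1" and "(1 + det A)^2 \<noteq> trace A ^ 2"
  shows "stein A (stein_solution A V) = V"
proof -
  define B where "B = A - mat (det A * trace A / (1 + det A))"
  have "stein A (\<alpha> *\<^sub>R V + \<gamma> *\<^sub>R (B ** V ** transpose B))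
      = \<alpha> *\<^sub>R stein A V + \<gamma> *\<^sub>R (B ** V ** transpose B - (A ** B) ** V ** transpose (A ** B))" for \<alpha> \<gamma>
    unfolding stein_def linear_add[OF linear_congruence] linear_scale[OF linear_congruence]
      congruence_mult by (simp add: algebra_simps)
  then show ?thesis
    using stein_solution_identity[OF assms, of V]
    by (simp add: stein_solution_def Let_def B_def)
qed

lemma linear_stein: "linear (stein A)"
  by (intro linearI)
    (simp_all add: stein_def linear_add[OF linear_congruence] linear_scale[OF linear_congruence]
      algebra_simps)

lemma linear_stein_solution: "linear (stein_solution A)"
  unfolding stein_solution_def[abs_def] Let_def
  by (intro real_vector.module_hom_add real_vector.module_hom_scale linear_scaleR linear_congruence)

lemma psd2_add: "psd2 X \<Longrightarrow> psd2 Y \<Longrightarrow> psd2 (X + Y)"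
  by (simp add: psd2_def transpose_def vec_eq_iff matrix_vector_mult_add_rdistrib inner_add_right)

lemma psd2_scaleR: "0 \<le> c \<Longrightarrow> psd2 X \<Longrightarrow> psd2 (c *\<^sub>R X)"
  by (simp add: psd2_def transpose_def vec_eq_iff scaleR_matrix_vector_assoc[symmetric])

lemma psd2_congruence:
  assumes "psd2 X"
  shows "psd2 (B ** X ** transpose B)"
proof -
  have "v \<bullet> ((B ** X ** transpose B) *v v) = (transpose B *v v) \<bullet> (X *v (transpose B *v v))" for v
    by (simp flip: matrix_vector_mul_assoc add: dot_lmul_matrix[symmetric])
  with assms show ?thesis
    by (simp add: psd2_def matrix_transpose_mul matrix_mul_assoc)
qed

lemma psd2_nonneg_11: "psd2 X \<Longrightarrow> 0 \<le> X$1$1"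
  unfolding psd2_def
  by (drule conjunct2, drule spec[of _ "vector [1, 0]"])
    (simp add: matrix_vector_mult_def inner_vec_def sum_2 vector_2)

lemma stein_solution_psd2:
  assumes "\<bar>det A\<bar> < 1" and "\<bar>trace A\<bar> < 1 + det A" and "psd2 V"
  shows "psd2 (stein_solution A V)"
proof -
  have "\<bar>trace A\<bar>^2 < (1 + det A)^2"
    using assms(2) by (intro power_strict_mono) auto
  then have "0 < (1 + det A)^2 - trace A ^ 2"
    by simp
  moreover have "0 < 1 - det A" "0 < 1 + det A"
    using assms(1) by auto
  moreover have "0 < 1 - det A ^ 2"
    using assms(1) by (simp add: abs_square_less_1)
  ultimately show ?thesis
    unfolding stein_solution_def Let_def
    by (intro psd2_add psd2_scaleR psd2_congruence assms(3)) simp_all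
qed

lemma transpose_congruence: "transpose (B ** X ** transpose B) = B ** transpose X ** transpose B"
  for B X :: "real^'n^'n"
  by (simp add: matrix_transpose_mul matrix_mul_assoc)

lemma transpose_add: "transpose (X + Y) = transpose X + transpose Y"
  and transpose_diff: "transpose (X - Y) = transpose X - transpose Y"
  for X Y :: "'a::ring^'n^'m"
  by (simp_all add: transpose_def vec_eq_iff)

lemma stein_solution_S2: "V \<in> S2 \<Longrightarrow> stein_solution A V \<in> S2"
  by (simp add: S2_def stein_solution_def Let_def transpose_add transpose_scalar transpose_congruence)

section \<open>Spectrum of the operator\<close>

lemma Mop_symmetric_entries:
  fixes e l b :: "'a::comm_ring_1"
  assumes "X$2$1 = X$1$2"
  shows "Mop e l b X $1$1 = ((1 - e*l)^2 + (e*l)^2) * X$1$1 - 2 * (1 - e*l) * b * X$1$2 + b^2 * X$2$2"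
    and "Mop e l b X $1$2 = e*l * (1 - 2*(e*l)) * X$1$1 + b * (1 - 2*(e*l)) * X$1$2 - b^2 * X$2$2"
    and "Mop e l b X $2$1 = Mop e l b X $1$2"
    and "Mop e l b X $2$2 = 2 * (e*l)^2 * X$1$1 + 2 * (e*l) * b * X$1$2 + b^2 * X$2$2"
  using assms
  by (simp_all add: Mop_def Amat_def Qmat_def mat2_def smat_def matrix_matrix_mult_def transpose_def
      sum_2 power2_eq_square algebra_simps)

text \<open>The matrix of \<open>M\<close> on \<open>S\<^sup>2\<close> in the coordinates \<open>(X\<^sub>1\<^sub>1, X\<^sub>1\<^sub>2, X\<^sub>2\<^sub>2)\<close>, with \<open>a = \<eta> lam\<close>.\<close>

definition Mop_coord_matrix :: "'a::comm_ring_1 \<Rightarrow> 'a \<Rightarrow> 'a^3^3" where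
  "Mop_coord_matrix a b = vector [
     vector [(1 - a)^2 + a^2, -2 * (1 - a) * b, b^2],
     vector [a * (1 - 2*a), b * (1 - 2*a), -(b^2)],
     vector [2 * a^2, 2 * a * b, b^2]]"

definition Mop_charpoly :: "'a::comm_ring_1 \<Rightarrow> 'a \<Rightarrow> 'a \<Rightarrow> 'a" where
  "Mop_charpoly a b z = z^3 - (1 + b + b^2 - 2*a - 2*a*b + 2*a^2) * z^2
     + (b + b^2 + b^3 - 2*a*b - 2*a*b^2) * z - b^3"

lemma det_Mop_coord_matrix: "det (Mop_coord_matrix a b - mat z) = - Mop_charpoly a b z"
  unfolding det_3
  by (simp add: Mop_coord_matrix_def Mop_charpoly_def vector_3 mat_def power2_eq_square power3_eq_cube
      algebra_simps)

lemma det_eq_0_iff_nontrivial_kernel: "det (K::'a::field^'n^'n) = 0 \<longleftrightarrow> (\<exists>v. v \<noteq> 0 \<and> K *v v = 0)"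
proof -
  have "det K \<noteq> 0 \<longleftrightarrow> (\<exists>B. B ** K = mat 1)"
    by (simp add: invertible_det_nz[symmetric] invertible_left_inverse)
  then show ?thesis
    by (auto simp: matrix_left_invertible_ker)
qed

lemma Mop_eigen_equation_coords:
  fixes e l b z :: "'a::comm_ring_1"
  assumes "Z$2$1 = Z$1$2"
  shows "Mop e l b Z = smat z Z \<longleftrightarrow> (Mop_coord_matrix (e*l) b - mat z) *v vector [Z$1$1, Z$1$2, Z$2$2] = 0"
proof -
  let ?v = "(Mop_coord_matrix (e*l) b - mat z) *v vector [Z$1$1, Z$1$2, Z$2$2]"
  have "?v$1 = Mop e l b Z $1$1 - z * Z$1$1" "?v$2 = Mop e l b Z $1$2 - z * Z$1$2"
    "?v$3 = Mop e l b Z $2$2 - z * Z$2$2"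
    unfolding Mop_symmetric_entries[OF assms]
    by (simp_all add: Mop_coord_matrix_def matrix_vector_mult_def sum_3 vector_3 mat_def algebra_simps)
  then show ?thesis
    using Mop_symmetric_entries(3)[OF assms, of e l b] assms
    by (auto simp: vec_eq_iff forall_2 forall_3 smat_def)
qed

lemma Mop_eigenvalue_iff_coord_kernel:
  "Mop_eigenvalue \<eta> lam \<beta> z \<longleftrightarrow>
    (\<exists>v. v \<noteq> 0 \<and> (Mop_coord_matrix (complex_of_real (\<eta> * lam)) (complex_of_real \<beta>) - mat z) *v v = 0)"
  (is "_ \<longleftrightarrow> (\<exists>v. v \<noteq> 0 \<and> ?K *v v = 0)")
proof
  let ?M = "Mop (complex_of_real \<eta>) (complex_of_real lam) (complex_of_real \<beta>)"
  assume "Mop_eigenvalue \<eta> lam \<beta> z"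
  then obtain Z where "transpose Z = Z" "Z \<noteq> 0" "?M Z = smat z Z"
    unfolding Mop_eigenvalue_def by blast
  moreover have sym: "Z$2$1 = Z$1$2"
    using arg_cong[OF \<open>transpose Z = Z\<close>, of "\<lambda>M. M$1$2"] by (simp add: transpose_def)
  ultimately have "vector [Z$1$1, Z$1$2, Z$2$2] \<noteq> (0 :: complex^3)" "?K *v vector [Z$1$1, Z$1$2, Z$2$2] = 0"
    using Mop_eigen_equation_coords[OF sym]
    by (auto simp: vec_eq_iff forall_2 forall_3 vector_3)
  then show "\<exists>v. v \<noteq> 0 \<and> ?K *v v = 0"
    by blast
next
  let ?M = "Mop (complex_of_real \<eta>) (complex_of_real lam) (complex_of_real \<beta>)"
  assume "\<exists>v. v \<noteq> 0 \<and> ?K *v v = 0"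
  then obtain v where "v \<noteq> 0" "?K *v v = 0"
    by blast
  define Z where "Z = mat2 (v$1) (v$2) (v$2) (v$3)"
  have Z: "Z$1$1 = v$1" "Z$1$2 = v$2" "Z$2$1 = v$2" "Z$2$2 = v$3"
    by (simp_all add: Z_def mat2_def)
  have "vector [Z$1$1, Z$1$2, Z$2$2] = v"
    by (simp add: Z vec_eq_iff forall_3 vector_3)
  then have "?M Z = smat z Z"
    using Mop_eigen_equation_coords[of Z] \<open>?K *v v = 0\<close> by (simp add: Z)
  moreover have "transpose Z = Z" "Z \<noteq> 0"
    using \<open>v \<noteq> 0\<close> by (auto simp: Z vec_eq_iff forall_2 forall_3 transpose_def)
  ultimately show "Mop_eigenvalue \<eta> lam \<beta> z"
    unfolding Mop_eigenvalue_def by blast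
qed

lemma Mop_eigenvalue_iff_charpoly_root:
  "Mop_eigenvalue \<eta> lam \<beta> z \<longleftrightarrow> Mop_charpoly (complex_of_real (\<eta> * lam)) (complex_of_real \<beta>) z = 0"
  unfolding Mop_eigenvalue_iff_coord_kernel det_eq_0_iff_nontrivial_kernel[symmetric] det_Mop_coord_matrix
  by simp

lemma Mop_charpoly_Jury_conditions:
  fixes a b :: real
  assumes "0 < a" "0 \<le> b" "b < 1" "a < 1 - b^2"
  defines "c2 \<equiv> -(1 + b + b^2 - 2*a - 2*a*b + 2*a^2)" and "c1 \<equiv> b + b^2 + b^3 - 2*a*b - 2*a*b^2"
    and "c0 \<equiv> -(b^3)"
  shows "\<bar>c1 - c0 * c2\<bar> < 1 - c0^2" and "0 < 1 + c2 + c1 + c0" and "0 < 1 - c2 + c1 - c0"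
proof -
  have "0 \<le> b^3" "b^3 < 1" "0 < 1 - b^2"
    using assms(2,3) by (simp_all add: power_less_one_iff abs_square_less_1)
  have "(1 - c0^2) - (c1 - c0 * c2) = (1 - b^3) * (1 - b) * (1 - b^2) + 2*a*b * (1 + b) * (1 - b^2) + 2*a^2*b^3"
    by (simp add: c0_def c1_def c2_def power2_eq_square power3_eq_cube algebra_simps)
  moreover have "0 < (1 - b^3) * (1 - b) * (1 - b^2)" "0 \<le> 2*a*b * (1 + b) * (1 - b^2)" "0 \<le> 2*a^2*b^3"
    using assms(1-3) \<open>b^3 < 1\<close> \<open>0 < 1 - b^2\<close> \<open>0 \<le> b^3\<close> by simp_all
  moreover have "(1 - c0^2) + (c1 - c0 * c2) = (1 - b^3) * (1 + b) * (1 + b^2) - 2*a*(b * (1 + b) * (1 - b^2)) - 2*a^2*b^3"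
    by (simp add: c0_def c1_def c2_def power2_eq_square power3_eq_cube algebra_simps)
  moreover have "a * (b * (1 + b) * (1 - b^2)) \<le> (1 - b^2) * (b * (1 + b) * (1 - b^2))"
    using assms \<open>0 < 1 - b^2\<close> by (intro mult_right_mono) auto
  moreover have "a^2 * b^3 \<le> (1 - b^2)^2 * b^3"
    using assms \<open>0 \<le> b^3\<close> by (intro mult_right_mono power_mono) auto
  moreover have "(1 - b^3) * (1 + b) * (1 + b^2) - 2 * (1 - b^2) * (b * (1 + b) * (1 - b^2)) - 2 * (1 - b^2)^2 * b^3
      = (1 - b^2) * (1 + b + b^2) * ((1 - b)^2 + 2 * b^3)"
    by (simp add: power2_eq_square power3_eq_cube algebra_simps)
  moreover have "0 < (1 - b^2) * (1 + b + b^2) * ((1 - b)^2 + 2 * b^3)"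
    using assms(2,3) \<open>0 < 1 - b^2\<close> \<open>0 \<le> b^3\<close> by (simp add: add_pos_nonneg)
  ultimately show "\<bar>c1 - c0 * c2\<bar> < 1 - c0^2"
    unfolding abs_less_iff by linarith
  have "1 + c2 + c1 + c0 = 2 * a * (1 - a - b^2)"
    by (simp add: c0_def c1_def c2_def power2_eq_square power3_eq_cube algebra_simps)
  then show "0 < 1 + c2 + c1 + c0"
    using assms(1,4) by simp
  have "2 * (1 - c2 + c1 - c0) = (2*a - (1 + b)^2)^2 + (1 + b) * (1 - b) * (b^2 + 3)"
    by (simp add: c0_def c1_def c2_def power2_eq_square power3_eq_cube algebra_simps)
  moreover have "0 < (1 + b) * (1 - b) * (b^2 + 3)"
    using assms(2,3) by (simp add: add_nonneg_pos)
  ultimately show "0 < 1 - c2 + c1 - c0"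
    by (smt (verit) zero_le_power2)
qed

lemma Mop_charpoly_cubic:
  "Mop_charpoly a b z = z^3 + (-(1 + b + b^2 - 2*a - 2*a*b + 2*a^2)) * z^2
     + (b + b^2 + b^3 - 2*a*b - 2*a*b^2) * z + (-(b^3))"
  by (simp add: Mop_charpoly_def algebra_simps)

lemma Mop_charpoly_of_real:
  "Mop_charpoly (of_real a) (of_real b) (of_real t) = (of_real (Mop_charpoly a b t) :: 'a::{real_algebra_1,comm_ring_1})"
  by (simp add: Mop_charpoly_def)

lemma Mop_charpoly_root_in_unit_disk:
  assumes "0 < a" "0 \<le> b" "b < 1" "a < 1 - b^2"
    and "Mop_charpoly (complex_of_real a) (complex_of_real b) z = 0"
  shows "cmod z < 1"
  using cubic_zero_in_unit_disk[OF Mop_charpoly_Jury_conditions[OF assms(1-4)]] assms(5)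
  by (simp add: Mop_charpoly_cubic)

lemma Mop_charpoly_real_root_above:
  fixes a b s :: real
  assumes "Mop_charpoly a b s \<le> 0"
  obtains t where "s \<le> t" "Mop_charpoly a b t = 0"
  using cubic_real_root_above assms unfolding Mop_charpoly_cubic by blast

lemma finite_Mop_eigenvalues: "finite {z. Mop_eigenvalue \<eta> lam \<beta> z}"
  unfolding Mop_eigenvalue_iff_charpoly_root Mop_charpoly_cubic by (rule finite_cubic_roots)

lemma Mop_specrad_less_1:
  assumes "0 < \<eta> * lam" "0 \<le> \<beta>" "\<beta> < 1" "\<eta> * lam < 1 - \<beta>^2"
  shows "Mop_specrad \<eta> lam \<beta> < 1"
proof -
  let ?E = "{z. Mop_eigenvalue \<eta> lam \<beta> z}"
  have "Mop_charpoly (\<eta> * lam) \<beta> 0 \<le> 0"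
    using assms(2) by (simp add: Mop_charpoly_def)
  then obtain t where "Mop_charpoly (\<eta> * lam) \<beta> t = 0"
    by (rule Mop_charpoly_real_root_above)
  then have "complex_of_real t \<in> ?E"
    by (simp only: mem_Collect_eq Mop_eigenvalue_iff_charpoly_root Mop_charpoly_of_real) simp
  then have nonempty: "cmod ` ?E \<noteq> {}"
    by blast
  have finite: "finite (cmod ` ?E)"
    using finite_Mop_eigenvalues by blast
  have "\<forall>x\<in>cmod ` ?E. x < 1"
    using Mop_charpoly_root_in_unit_disk[OF assms] by (simp add: Mop_eigenvalue_iff_charpoly_root)
  then show ?thesis
    unfolding Mop_specrad_def cSup_eq_Max[OF finite nonempty] Max_less_iff[OF finite nonempty] .
qed

lemma Mop_specrad_ge_1:
  assumes "0 \<le> \<eta> * lam" "1 - \<beta>^2 \<le> \<eta> * lam"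
  shows "1 \<le> Mop_specrad \<eta> lam \<beta>"
proof -
  have "Mop_charpoly (\<eta> * lam) \<beta> 1 = 2 * (\<eta> * lam) * (1 - \<beta>^2 - \<eta> * lam)"
    by (simp add: Mop_charpoly_def power2_eq_square power3_eq_cube algebra_simps)
  then have "Mop_charpoly (\<eta> * lam) \<beta> 1 \<le> 0"
    using assms by (simp add: mult_nonneg_nonpos)
  then obtain t where "1 \<le> t" "Mop_charpoly (\<eta> * lam) \<beta> t = 0"
    by (rule Mop_charpoly_real_root_above)
  then have "complex_of_real t \<in> {z. Mop_eigenvalue \<eta> lam \<beta> z}"
    by (simp only: mem_Collect_eq Mop_eigenvalue_iff_charpoly_root Mop_charpoly_of_real) simp
  then have "cmod (complex_of_real t) \<in> cmod ` {z. Mop_eigenvalue \<eta> lam \<beta> z}"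
    by blast
  then have "cmod (complex_of_real t) \<le> Mop_specrad \<eta> lam \<beta>"
    unfolding Mop_specrad_def using finite_Mop_eigenvalues by (auto intro: cSup_upper bdd_above_finite)
  with \<open>1 \<le> t\<close> show ?thesis
    by simp
qed

section \<open>Inverse of the identity minus the operator\<close>

lemma sherman_morrison:
  fixes T S :: "'a::real_vector \<Rightarrow> 'a" and \<phi> :: "'a \<Rightarrow> real"
  assumes "linear T" "linear S" "linear \<phi>"
    and S_T: "\<And>x. S (T x) = x" and T_S: "\<And>u. T (S u) = u" and "\<phi> (S q) \<noteq> 1"
  defines "G u \<equiv> S u + (\<phi> (S u) / (1 - \<phi> (S q))) *\<^sub>R S q"
  shows "G (T x - \<phi> x *\<^sub>R q) = x" and "T (G u) - \<phi> (G u) *\<^sub>R q = u"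
proof -
  have \<kappa>: "1 - \<phi> (S q) \<noteq> 0"
    using assms(6) by simp
  have "S (T x - \<phi> x *\<^sub>R q) = x - \<phi> x *\<^sub>R S q"
    using assms(2) by (simp add: S_T real_vector.linear_diff real_vector.linear_scale)
  moreover have "\<phi> (x - \<phi> x *\<^sub>R S q) / (1 - \<phi> (S q)) = \<phi> x"
    using assms(3) \<kappa> by (simp add: real_vector.linear_diff real_vector.linear_scale field_simps)
  ultimately show "G (T x - \<phi> x *\<^sub>R q) = x"
    by (simp add: G_def)
  have "\<phi> (G u) = \<phi> (S u) / (1 - \<phi> (S q))"
    using assms(3) \<kappa> by (simp add: G_def real_vector.linear_add real_vector.linear_scale field_simps)
  then show "T (G u) - \<phi> (G u) *\<^sub>R q = u"
    using assms(1) by (simp add: G_def T_S real_vector.linear_add real_vector.linear_scale)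
qed

lemma det_Amat: "det (Amat \<eta> lam \<beta>) = \<beta>"
  by (simp add: Amat_def mat2_def det_2 algebra_simps)

lemma trace_Amat: "trace (Amat \<eta> lam \<beta>) = 1 - \<eta> * lam + \<beta>"
  by (simp add: Amat_def mat2_def trace_def sum_2)

lemma smat_real: "smat c X = c *\<^sub>R X"
  by (simp add: smat_def vec_eq_iff)

lemma Qmat_psd2: "psd2 Qmat"
proof -
  have "v \<bullet> (Qmat *v v) = (v$1 - v$2)^2" for v :: "real^2"
    by (simp add: Qmat_def mat2_def inner_vec_def matrix_vector_mult_def sum_2 power2_eq_square algebra_simps)
  then show ?thesis
    by (simp add: psd2_def Qmat_def mat2_def transpose_def vec_eq_iff forall_2)
qed

lemma congruence_Qmat_11: "(B ** Qmat ** transpose B)$1$1 = (B$1$1 - B$1$2)^2"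
  for B :: "real^2^2"
  by (simp add: Qmat_def mat2_def matrix_matrix_mult_def transpose_def sum_2 power2_eq_square algebra_simps)

lemma Qmat_S2: "Qmat \<in> S2"
  using Qmat_psd2 by (simp add: psd2_def S2_def)

lemma Mop_eq_stein:
  "X - Mop \<eta> lam \<beta> X = stein (Amat \<eta> lam \<beta>) X - ((\<eta> * lam)^2 * X$1$1) *\<^sub>R Qmat"
  by (simp add: Mop_def smat_real stein_def power_mult_distrib)

lemma Mop_S2: "X \<in> S2 \<Longrightarrow> X - Mop \<eta> lam \<beta> X \<in> S2"
  using Qmat_S2
  by (simp add: Mop_eq_stein stein_def S2_def transpose_diff transpose_scalar transpose_congruence)

text \<open>By lemma \<open>Mop_eq_stein\<close>, \<open>Id - M\<close> is \<open>stein A\<close> minus the rank-one map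
  \<open>X \<mapsto> (\<eta> lam)\<^sup>2 X\<^sub>1\<^sub>1 Q\<close>; its inverse is given by the Sherman-Morrison formula.\<close>

definition Mop_resolvent :: "real \<Rightarrow> real \<Rightarrow> real \<Rightarrow> real^2^2 \<Rightarrow> real^2^2" where
  "Mop_resolvent \<eta> lam \<beta> U =
     (let S = stein_solution (Amat \<eta> lam \<beta>); c = (\<eta> * lam)^2 in
      S U + (c * S U $1$1 / (1 - c * S Qmat $1$1)) *\<^sub>R S Qmat)"

context
  fixes \<eta> lam \<beta> :: real
  assumes pos: "0 < \<eta> * lam" and \<beta>_nonneg: "0 \<le> \<beta>" and \<beta>_less_1: "\<beta> < 1"
    and stable: "\<eta> * lam < 1 - \<beta>^2"
begin

lemma stability_bounds: "\<eta> * lam < 1" "0 < 1 - \<beta>" "0 < 2 + 2 * \<beta> - \<eta> * lam"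
  using stable \<beta>_nonneg \<beta>_less_1 by (smt (verit) zero_le_power2)+

lemma Amat_schur_stable:
  "\<bar>det (Amat \<eta> lam \<beta>)\<bar> < 1" "\<bar>trace (Amat \<eta> lam \<beta>)\<bar> < 1 + det (Amat \<eta> lam \<beta>)"
  using stability_bounds pos \<beta>_nonneg \<beta>_less_1 by (auto simp: det_Amat trace_Amat)

lemma stein_solution_Amat_Qmat_11:
  "stein_solution (Amat \<eta> lam \<beta>) Qmat $1$1 = (1 + \<beta>) / ((1 - \<beta>) * (\<eta> * lam) * (2 + 2 * \<beta> - \<eta> * lam))"
proof -
  define a where "a = \<eta> * lam"
  define k where "k = \<beta> * (1 - a + \<beta>) / (1 + \<beta>)"
  have nz: "a \<noteq> 0" "2 + 2 * \<beta> - a \<noteq> 0" "1 - \<beta> \<noteq> 0" "1 + \<beta> \<noteq> 0"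
    using pos stability_bounds \<beta>_nonneg by (auto simp: a_def)
  have "(Amat \<eta> lam \<beta> - mat k)$1$1 - (Amat \<eta> lam \<beta> - mat k)$1$2 = (1 - a + \<beta>) / (1 + \<beta>)"
    using \<open>1 + \<beta> \<noteq> 0\<close> by (simp add: Amat_def mat2_def mat_def a_def k_def field_simps)
  moreover have "(Qmat :: real^2^2)$1$1 = 1"
    by (simp add: Qmat_def mat2_def)
  ultimately have "stein_solution (Amat \<eta> lam \<beta>) Qmat $1$1
      = 1 / (1 - \<beta>^2) + (1 + \<beta>) / ((1 - \<beta>) * ((1 + \<beta>)^2 - (1 - a + \<beta>)^2)) * ((1 - a + \<beta>) / (1 + \<beta>))^2"
    unfolding stein_solution_def Let_def det_Amat trace_Amat a_def[symmetric] k_def[symmetric]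
    by (simp add: congruence_Qmat_11)
  also have "(1 + \<beta>)^2 - (1 - a + \<beta>)^2 = a * (2 + 2 * \<beta> - a)"
    by (simp add: power2_eq_square algebra_simps)
  also have "1 - \<beta>^2 = (1 - \<beta>) * (1 + \<beta>)"
    by (simp add: power2_eq_square algebra_simps)
  also have "1 / ((1 - \<beta>) * (1 + \<beta>)) + (1 + \<beta>) / ((1 - \<beta>) * (a * (2 + 2 * \<beta> - a))) * ((1 - a + \<beta>) / (1 + \<beta>))^2
      = (1 + \<beta>) / ((1 - \<beta>) * (a * (2 + 2 * \<beta> - a)))"
  proof -
    have field_identity: "1 / (D * E) + E / (D * F) * (N / E)^2 = E / (D * F)"
      if "D \<noteq> 0" "E \<noteq> 0" "F \<noteq> 0" "F + N^2 = E^2" for D E F N :: real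
      using that by (simp add: field_simps power2_eq_square)
    moreover have "a * (2 + 2 * \<beta> - a) + (1 - a + \<beta>)^2 = (1 + \<beta>)^2"
      by (simp add: power2_eq_square algebra_simps)
    ultimately show ?thesis
      using nz by simp
  qed
  finally show ?thesis
    by (simp only: a_def mult.assoc)
qed

lemma Mop_resolvent_denominator:
  "1 - (\<eta> * lam)^2 * stein_solution (Amat \<eta> lam \<beta>) Qmat $1$1
    = 2 * (1 - \<beta>^2 - \<eta> * lam) / ((1 - \<beta>) * (2 + 2 * \<beta> - \<eta> * lam))"
proof -
  have field_identity: "1 - x^2 * (y / (z * x * w)) = (z * w - x * y) / (z * w)"
    if "x \<noteq> 0" "z \<noteq> 0" "w \<noteq> 0" for x y z w :: real
    using that by (simp add: power2_eq_square field_simps)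
  have "1 - (\<eta> * lam)^2 * ((1 + \<beta>) / ((1 - \<beta>) * (\<eta> * lam) * (2 + 2 * \<beta> - \<eta> * lam)))
      = ((1 - \<beta>) * (2 + 2 * \<beta> - \<eta> * lam) - \<eta> * lam * (1 + \<beta>)) / ((1 - \<beta>) * (2 + 2 * \<beta> - \<eta> * lam))"
    by (rule field_identity) (use pos stability_bounds in auto)
  also have "(1 - \<beta>) * (2 + 2 * \<beta> - \<eta> * lam) - \<eta> * lam * (1 + \<beta>) = 2 * (1 - \<beta>^2 - \<eta> * lam)"
    by (simp add: power2_eq_square algebra_simps)
  finally show ?thesis
    unfolding stein_solution_Amat_Qmat_11 .
qed

lemma Mop_resolvent_denominator_pos: "0 < 1 - (\<eta> * lam)^2 * stein_solution (Amat \<eta> lam \<beta>) Qmat $1$1"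
  unfolding Mop_resolvent_denominator using stable stability_bounds by simp

lemma Mop_resolvent_inverse:
  "Mop_resolvent \<eta> lam \<beta> (X - Mop \<eta> lam \<beta> X) = X"
  "Mop_resolvent \<eta> lam \<beta> U - Mop \<eta> lam \<beta> (Mop_resolvent \<eta> lam \<beta> U) = U"
proof -
  let ?A = "Amat \<eta> lam \<beta>" and ?\<phi> = "\<lambda>X::real^2^2. (\<eta> * lam)^2 * X$1$1"
  have "\<bar>trace ?A\<bar>^2 < (1 + det ?A)^2"
    using Amat_schur_stable by (intro power_strict_mono) auto
  then have "det ?A ^ 2 \<noteq> 1" "(1 + det ?A)^2 \<noteq> trace ?A ^ 2"
    using Amat_schur_stable(1) abs_square_less_1[of "det ?A"] by auto
  note inverse = stein_solution_stein[OF this] stein_stein_solution[OF this]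
  have "linear ?\<phi>"
    by (intro linearI) (simp_all add: algebra_simps)
  note SM = sherman_morrison[OF linear_stein linear_stein_solution this inverse]
  have "?\<phi> (stein_solution ?A Qmat) \<noteq> 1"
    using Mop_resolvent_denominator_pos by simp
  from SM[OF this] show "Mop_resolvent \<eta> lam \<beta> (X - Mop \<eta> lam \<beta> X) = X"
    "Mop_resolvent \<eta> lam \<beta> U - Mop \<eta> lam \<beta> (Mop_resolvent \<eta> lam \<beta> U) = U"
    unfolding Mop_eq_stein Mop_resolvent_def Let_def by simp_all
qed

lemma Mop_resolvent_S2: "U \<in> S2 \<Longrightarrow> Mop_resolvent \<eta> lam \<beta> U \<in> S2"
  using stein_solution_S2[OF Qmat_S2] stein_solution_S2[of U]
  by (simp add: Mop_resolvent_def Let_def S2_def transpose_add transpose_scalar)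

lemma Mop_resolvent_psd2:
  assumes "psd2 U"
  shows "psd2 (Mop_resolvent \<eta> lam \<beta> U)"
proof -
  let ?S = "stein_solution (Amat \<eta> lam \<beta>)"
  have "psd2 (?S U)" "psd2 (?S Qmat)"
    using stein_solution_psd2[OF Amat_schur_stable] assms Qmat_psd2 by auto
  moreover have "0 \<le> (\<eta> * lam)^2 * ?S U $1$1 / (1 - (\<eta> * lam)^2 * ?S Qmat $1$1)"
    using psd2_nonneg_11[OF \<open>psd2 (?S U)\<close>] Mop_resolvent_denominator_pos by simp
  ultimately show ?thesis
    unfolding Mop_resolvent_def Let_def by (intro psd2_add psd2_scaleR)
qed

lemma Mop_resolvent_Qmat_11:
  "Mop_resolvent \<eta> lam \<beta> Qmat $1$1 = (1 + \<beta>) / (2 * \<eta> * lam * (1 - \<beta>^2 - \<eta> * lam))"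
proof -
  define s where "s = stein_solution (Amat \<eta> lam \<beta>) Qmat $1$1"
  have "s + (q / (1 - q)) * s = s / (1 - q)" if "1 - q \<noteq> 0" for q
    using that by (simp add: field_simps)
  then have "Mop_resolvent \<eta> lam \<beta> Qmat $1$1 = s / (1 - (\<eta> * lam)^2 * s)"
    using Mop_resolvent_denominator_pos by (simp add: Mop_resolvent_def Let_def s_def)
  also have "\<dots> = (1 + \<beta>) / (2 * \<eta> * lam * (1 - \<beta>^2 - \<eta> * lam))"
  proof -
    have field_identity: "y / (z * x * w) / (2 * m / (z * w)) = y / (2 * x * m)"
      if "x \<noteq> 0" "z \<noteq> 0" "w \<noteq> 0" for x y z w m :: real
      using that by (simp add: field_simps)
    have "s / (1 - (\<eta> * lam)^2 * s) = (1 + \<beta>) / (2 * (\<eta> * lam) * (1 - \<beta>^2 - \<eta> * lam))"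
      unfolding s_def Mop_resolvent_denominator unfolding stein_solution_Amat_Qmat_11
      by (rule field_identity) (use pos stability_bounds in auto)
    then show ?thesis
      by (simp only: mult.assoc)
  qed
  finally show ?thesis .
qed

end

theorem lemmaA3:
  fixes \<eta> lam \<beta> :: real
  assumes "\<eta> > 0" and "0 \<le> \<beta>" and "\<beta> < 1" and "\<eta> * lam > 0"
  shows "(Mop_specrad \<eta> lam \<beta> < 1 \<longleftrightarrow> \<eta> * lam < 1 - \<beta>^2)
    \<and> (\<eta> * lam < 1 - \<beta>^2 \<longrightarrow>
         bij_betw (\<lambda>X. X - Mop \<eta> lam \<beta> X) S2 S2
       \<and> inv_into S2 (\<lambda>X. X - Mop \<eta> lam \<beta> X) ` S2_plus \<subseteq> S2_plus)
    \<and> (\<eta> * lam < 1 - \<beta>^2 \<longrightarrow>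
         (let Y = inv_into S2 (\<lambda>X. X - Mop \<eta> lam \<beta> X) Qmat in
            Y \<in> S2_plus \<and>
            Y$1$1 = (1 + \<beta>) / (2 * \<eta> * lam * (1 - \<beta>^2 - \<eta> * lam))))"
proof -
  let ?L = "\<lambda>X. X - Mop \<eta> lam \<beta> X"
  have "Mop_specrad \<eta> lam \<beta> < 1 \<longleftrightarrow> \<eta> * lam < 1 - \<beta>^2"
    using Mop_specrad_less_1[OF assms(4,2,3)] Mop_specrad_ge_1[of \<eta> lam \<beta>] assms(4) by force
  moreover have "bij_betw ?L S2 S2 \<and> inv_into S2 ?L ` S2_plus \<subseteq> S2_plus
      \<and> inv_into S2 ?L Qmat \<in> S2_plus
      \<and> inv_into S2 ?L Qmat $1$1 = (1 + \<beta>) / (2 * \<eta> * lam * (1 - \<beta>^2 - \<eta> * lam))"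
    if stable: "\<eta> * lam < 1 - \<beta>^2"
  proof -
    note resolvent = Mop_resolvent_inverse[OF assms(4,2,3) stable]
      Mop_resolvent_S2[OF assms(4,2,3) stable] Mop_resolvent_psd2[OF assms(4,2,3) stable]
    have bij: "bij_betw ?L S2 S2"
      by (rule bij_betw_byWitness[where f' = "Mop_resolvent \<eta> lam \<beta>"]) (auto simp: resolvent Mop_S2)
    have inverse: "inv_into S2 ?L U = Mop_resolvent \<eta> lam \<beta> U" if "U \<in> S2" for U
      using bij_betw_imp_inj_on[OF bij] resolvent(3)[OF that] resolvent(2) by (rule inv_into_f_eq)
    have "S2_plus \<subseteq> S2"
      by (auto simp: S2_plus_def psd2_def S2_def)
    then show ?thesis
      using Qmat_S2 Qmat_psd2 bij inverse resolvent(4)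
        Mop_resolvent_Qmat_11[OF assms(4,2,3) stable] by (auto simp: S2_plus_def)
  qed
  ultimately show ?thesis
    by (simp add: Let_def)
qed

end
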